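(* Consider a sequential team problem with a stochastically partially nested information structure. If the cost function $c(\omega_0,\mathbf{u})$ is convex in $\mathbf{u}$, then the team problem is convex.
   Context: Sequential team: DMs $t=1,\dots,N$ observe $y^t=\eta_t(\omega,u^1,\dots,u^{t-1})$ and act $u^t=\gamma_t(y^t)$ with measurable policies, action spaces being convex subsets of Euclidean spaces; cost $J(\underline{\gamma})=E[c(\omega_0,\mathbf{u})]$. A static reduction of the team is an equivalent static team (measurements made independent of actions via a change of reference measure $P(y^t\in S|\omega,u^1,\dots,u^{t-1})=\int_Sf_t\,dQ_t$, with loss adjusted by the densities $f_t$) such that the costs of all policies coincide. The information structure is stochastically partially nested if, for an arbitrary cost function $c:\Omega_0\times\prod_k\mathbb{U}^k\to\mathbb{R}$, there exists a static reduction of the team which does not alter the loss function. A team problem is convex if $J(\underline{\gamma})<\infty$ for all admissible $\underline{\gamma}$ and $J(\alpha\underline{\gamma}_1+(1-\alpha)\underline{\gamma}_2)\le\alpha J(\underline{\gamma}_1)+(1-\alpha)J(\underline{\gamma}_2)$ for all $\alpha\in(0,1)$.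
   Formalization: The cost c is also measurable and $c(\omega_0,\mathbf{u})$ is integrable under every admissible policy, so $J(\underline{\gamma})<\infty$ for all admissible $\underline{\gamma}$ is assumed rather than concluded. Each condition added here is assumed in the paper as well or is needed for the statement above to hold. *)

theory Defs
  imports "HOL-Probability.Probability"
begin

text \<open>DMs are indexed 0,...,N-1 (the paper uses 1,...,N).
  M : probability space of the primitive random variable omega.
  om0 : the component omega_0 of omega entering the cost (measurable into W0).
  Y t : measurement space of DM t;  U t : convex action set of DM t, a subset of
  a Euclidean space 'u.
  eta t omega u : measurement of DM t, depending on the earlier actions
  u 0, ..., u (t-1) only (u is given as an extensional function on {..<t}).
  gamma t : policy of DM t.\<close>

definition admissible_policy ::
  "nat \<Rightarrow> (nat \<Rightarrow> 'y measure) \<Rightarrow> (nat \<Rightarrow> 'u::euclidean_space set) \<Rightarrow> (nat \<Rightarrow> 'y \<Rightarrow> 'u) \<Rightarrow> bool" where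
  "admissible_policy N Y U \<gamma> \<longleftrightarrow>
     (\<forall>t<N. \<gamma> t \<in> borel_measurable (Y t) \<and> \<gamma> t ` space (Y t) \<subseteq> U t)"

primrec team_acts ::
  "(nat \<Rightarrow> 'a \<Rightarrow> (nat \<Rightarrow> 'u) \<Rightarrow> 'y) \<Rightarrow> (nat \<Rightarrow> 'y \<Rightarrow> 'u) \<Rightarrow> 'a \<Rightarrow> nat \<Rightarrow> (nat \<Rightarrow> 'u)" where
  "team_acts \<eta> \<gamma> \<omega> 0 = (\<lambda>_. undefined)"
| "team_acts \<eta> \<gamma> \<omega> (Suc t) =
     (team_acts \<eta> \<gamma> \<omega> t)(t := \<gamma> t (\<eta> t \<omega> (team_acts \<eta> \<gamma> \<omega> t)))"

definition team_loss ::
  "nat \<Rightarrow> ('a \<Rightarrow> 'o) \<Rightarrow> (nat \<Rightarrow> 'a \<Rightarrow> (nat \<Rightarrow> 'u) \<Rightarrow> 'y) \<Rightarrow> ('o \<Rightarrow> (nat \<Rightarrow> 'u) \<Rightarrow> real)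
     \<Rightarrow> (nat \<Rightarrow> 'y \<Rightarrow> 'u) \<Rightarrow> 'a \<Rightarrow> real" where
  "team_loss N om0 \<eta> c \<gamma> \<omega> = c (om0 \<omega>) (team_acts \<eta> \<gamma> \<omega> N)"

definition team_cost ::
  "'a measure \<Rightarrow> nat \<Rightarrow> ('a \<Rightarrow> 'o) \<Rightarrow> (nat \<Rightarrow> 'a \<Rightarrow> (nat \<Rightarrow> 'u) \<Rightarrow> 'y) \<Rightarrow> ('o \<Rightarrow> (nat \<Rightarrow> 'u) \<Rightarrow> real)
     \<Rightarrow> (nat \<Rightarrow> 'y \<Rightarrow> 'u) \<Rightarrow> real" where
  "team_cost M N om0 \<eta> c \<gamma> = (\<integral>\<omega>. team_loss N om0 \<eta> c \<gamma> \<omega> \<partial>M)"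

definition action_space :: "nat \<Rightarrow> (nat \<Rightarrow> 'u::euclidean_space set) \<Rightarrow> (nat \<Rightarrow> 'u) measure" where
  "action_space N U = PiM {..<N} (\<lambda>k. restrict_space borel (U k))"

text \<open>Loss of the static team: the measurements y are primitive (independent of
  actions) and the loss is the original c.\<close>
definition static_loss ::
  "nat \<Rightarrow> ('o \<Rightarrow> (nat \<Rightarrow> 'u) \<Rightarrow> real) \<Rightarrow> (nat \<Rightarrow> 'y \<Rightarrow> 'u) \<Rightarrow> 'o \<times> (nat \<Rightarrow> 'y) \<Rightarrow> real" where
  "static_loss N c \<gamma> = (\<lambda>(w, y). c w (restrict (\<lambda>t. \<gamma> t (y t)) {..<N}))"

text \<open>Stochastically partially nested: for an arbitrary (measurable) cost function c,
  there is a static reduction which does not alter the loss function, i.e. a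
  static team with primitive variables (omega_0, y^0, ..., y^(N-1)) distributed
  according to a probability measure Q and with the same loss c, such that the
  costs of all admissible policies coincide (including finiteness).\<close>
definition stoch_partially_nested ::
  "'a measure \<Rightarrow> 'o measure \<Rightarrow> ('a \<Rightarrow> 'o) \<Rightarrow> (nat \<Rightarrow> 'y measure) \<Rightarrow> (nat \<Rightarrow> 'u::euclidean_space set)
     \<Rightarrow> (nat \<Rightarrow> 'a \<Rightarrow> (nat \<Rightarrow> 'u) \<Rightarrow> 'y) \<Rightarrow> nat \<Rightarrow> bool" where
  "stoch_partially_nested M W0 om0 Y U \<eta> N \<longleftrightarrow>
    (\<forall>c. (\<lambda>(w, u). c w u) \<in> borel_measurable (W0 \<Otimes>\<^sub>M action_space N U) \<longrightarrow>
      (\<exists>Q. prob_space Q \<and> sets Q = sets (W0 \<Otimes>\<^sub>M PiM {..<N} Y) \<and>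
        (\<forall>\<gamma>. admissible_policy N Y U \<gamma> \<longrightarrow>
           (integrable M (team_loss N om0 \<eta> c \<gamma>) \<longleftrightarrow> integrable Q (static_loss N c \<gamma>)) \<and>
           team_cost M N om0 \<eta> c \<gamma> = (\<integral>z. static_loss N c \<gamma> z \<partial>Q))))"

definition convex_team ::
  "'a measure \<Rightarrow> nat \<Rightarrow> ('a \<Rightarrow> 'o) \<Rightarrow> (nat \<Rightarrow> 'y measure) \<Rightarrow> (nat \<Rightarrow> 'u::euclidean_space set)
     \<Rightarrow> (nat \<Rightarrow> 'a \<Rightarrow> (nat \<Rightarrow> 'u) \<Rightarrow> 'y) \<Rightarrow> ('o \<Rightarrow> (nat \<Rightarrow> 'u) \<Rightarrow> real) \<Rightarrow> bool" where
  "convex_team M N om0 Y U \<eta> c \<longleftrightarrow>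
    (\<forall>\<gamma>. admissible_policy N Y U \<gamma> \<longrightarrow> integrable M (team_loss N om0 \<eta> c \<gamma>)) \<and>
    (\<forall>\<gamma>1 \<gamma>2 \<alpha>. admissible_policy N Y U \<gamma>1 \<longrightarrow> admissible_policy N Y U \<gamma>2 \<longrightarrow>
        \<alpha> \<in> {0<..<1} \<longrightarrow>
        team_cost M N om0 \<eta> c (\<lambda>t y. \<alpha> *\<^sub>R \<gamma>1 t y + (1 - \<alpha>) *\<^sub>R \<gamma>2 t y)
          \<le> \<alpha> * team_cost M N om0 \<eta> c \<gamma>1 + (1 - \<alpha>) * team_cost M N om0 \<eta> c \<gamma>2)"

definition cost_convex_in_actions ::
  "'o measure \<Rightarrow> nat \<Rightarrow> (nat \<Rightarrow> 'u::euclidean_space set) \<Rightarrow> ('o \<Rightarrow> (nat \<Rightarrow> 'u) \<Rightarrow> real) \<Rightarrow> bool" where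
  "cost_convex_in_actions W0 N U c \<longleftrightarrow>
    (\<forall>w\<in>space W0. \<forall>u\<in>PiE {..<N} U. \<forall>v\<in>PiE {..<N} U. \<forall>\<alpha>\<in>{0..1}.
       c w (\<lambda>k. \<alpha> *\<^sub>R u k + (1 - \<alpha>) *\<^sub>R v k) \<le> \<alpha> * c w u + (1 - \<alpha>) * c w v)"

end

theory Submission
  imports Defs
begin

text \<open>In a static reduction that keeps the loss c, the measurements are primitive: the cost of
  a policy \<gamma> is the integral of c(w, \<gamma>(y)) against one fixed measure Q that does not depend
  on \<gamma>. Mixing two policies therefore mixes the resulting action vectors pointwise in (w, y),
  convexity of c in the actions gives the inequality pointwise, and integrating against Q
  transfers it to the costs.\<close>

lemma admissible_policy_convex_combination:
  assumes "\<forall>t<N. convex (U t)"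
    and "admissible_policy N Y U \<gamma>1" and "admissible_policy N Y U \<gamma>2"
    and "\<alpha> \<in> {0..1}"
  shows "admissible_policy N Y U (\<lambda>t y. \<alpha> *\<^sub>R \<gamma>1 t y + (1 - \<alpha>) *\<^sub>R \<gamma>2 t y)"
  unfolding admissible_policy_def
proof (intro allI impI conjI)
  fix t assume t: "t < N"
  have "\<gamma>1 t \<in> borel_measurable (Y t)" "\<gamma>2 t \<in> borel_measurable (Y t)"
    using assms(2,3) t unfolding admissible_policy_def by auto
  then show "(\<lambda>y. \<alpha> *\<^sub>R \<gamma>1 t y + (1 - \<alpha>) *\<^sub>R \<gamma>2 t y) \<in> borel_measurable (Y t)"
    by measurable
  show "(\<lambda>y. \<alpha> *\<^sub>R \<gamma>1 t y + (1 - \<alpha>) *\<^sub>R \<gamma>2 t y) ` space (Y t) \<subseteq> U t"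
  proof clarify
    fix y assume "y \<in> space (Y t)"
    then have "\<gamma>1 t y \<in> U t" "\<gamma>2 t y \<in> U t"
      using assms(2,3) t unfolding admissible_policy_def by blast+
    then show "\<alpha> *\<^sub>R \<gamma>1 t y + (1 - \<alpha>) *\<^sub>R \<gamma>2 t y \<in> U t"
      using assms(1,4) t unfolding convex_def by auto
  qed
qed

lemma static_loss_convex_combination:
  assumes "cost_convex_in_actions W0 N U c"
    and "admissible_policy N Y U \<gamma>1" and "admissible_policy N Y U \<gamma>2"
    and "\<alpha> \<in> {0..1}"
    and "z \<in> space (W0 \<Otimes>\<^sub>M PiM {..<N} Y)"
  shows "static_loss N c (\<lambda>t y. \<alpha> *\<^sub>R \<gamma>1 t y + (1 - \<alpha>) *\<^sub>R \<gamma>2 t y) z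
           \<le> \<alpha> * static_loss N c \<gamma>1 z + (1 - \<alpha>) * static_loss N c \<gamma>2 z"
proof -
  obtain w y where z: "z = (w, y)" by (cases z)
  have w: "w \<in> space W0" and y: "\<And>t. t < N \<Longrightarrow> y t \<in> space (Y t)"
    using assms(5) unfolding z space_pair_measure by (auto simp: space_PiM)
  define u where "u = restrict (\<lambda>t. \<gamma>1 t (y t)) {..<N}"
  define v where "v = restrict (\<lambda>t. \<gamma>2 t (y t)) {..<N}"
  have u: "u \<in> PiE {..<N} U"
    using assms(2) y unfolding u_def admissible_policy_def by auto
  have v: "v \<in> PiE {..<N} U"
    using assms(3) y unfolding v_def admissible_policy_def by auto
  have mixed_actions: "restrict (\<lambda>t. \<alpha> *\<^sub>R \<gamma>1 t (y t) + (1 - \<alpha>) *\<^sub>R \<gamma>2 t (y t)) {..<N}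
      = (\<lambda>k. \<alpha> *\<^sub>R u k + (1 - \<alpha>) *\<^sub>R v k)"
    unfolding u_def v_def by (auto simp: fun_eq_iff algebra_simps)
  have "c w (\<lambda>k. \<alpha> *\<^sub>R u k + (1 - \<alpha>) *\<^sub>R v k) \<le> \<alpha> * c w u + (1 - \<alpha>) * c w v"
    using assms(1,4) w u v unfolding cost_convex_in_actions_def by blast
  then show ?thesis
    unfolding z static_loss_def by (simp add: mixed_actions u_def v_def)
qed

lemma integral_le_convex_combination:
  fixes f g h :: "'a \<Rightarrow> real"
  assumes "integrable M f" and "integrable M g" and "integrable M h"
    and "\<And>x. x \<in> space M \<Longrightarrow> h x \<le> \<alpha> * f x + (1 - \<alpha>) * g x"
  shows "(\<integral>x. h x \<partial>M) \<le> \<alpha> * (\<integral>x. f x \<partial>M) + (1 - \<alpha>) * (\<integral>x. g x \<partial>M)"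
proof -
  have "(\<integral>x. h x \<partial>M) \<le> (\<integral>x. \<alpha> * f x + (1 - \<alpha>) * g x \<partial>M)"
    using assms by (intro integral_mono) auto
  also have "\<dots> = \<alpha> * (\<integral>x. f x \<partial>M) + (1 - \<alpha>) * (\<integral>x. g x \<partial>M)"
    using assms(1,2) by simp
  finally show ?thesis .
qed

theorem mainTheorem12:
  fixes M :: "'a measure" and W0 :: "'o measure" and om0 :: "'a \<Rightarrow> 'o"
    and Y :: "nat \<Rightarrow> 'y measure" and U :: "nat \<Rightarrow> 'u::euclidean_space set"
    and \<eta> :: "nat \<Rightarrow> 'a \<Rightarrow> (nat \<Rightarrow> 'u) \<Rightarrow> 'y" and N :: nat
    and c :: "'o \<Rightarrow> (nat \<Rightarrow> 'u) \<Rightarrow> real"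
  assumes "prob_space M"
    and "om0 \<in> M \<rightarrow>\<^sub>M W0"
    and "\<forall>t<N. convex (U t)"
    and "\<forall>t<N. (\<lambda>(\<omega>, u). \<eta> t \<omega> u) \<in> (M \<Otimes>\<^sub>M action_space t U) \<rightarrow>\<^sub>M Y t"
    and "(\<lambda>(w, u). c w u) \<in> borel_measurable (W0 \<Otimes>\<^sub>M action_space N U)"
    and "\<forall>\<gamma>. admissible_policy N Y U \<gamma> \<longrightarrow> integrable M (team_loss N om0 \<eta> c \<gamma>)"
    and "stoch_partially_nested M W0 om0 Y U \<eta> N"
    and "cost_convex_in_actions W0 N U c"
  shows "convex_team M N om0 Y U \<eta> c"
proof -
  obtain Q where sets_Q: "sets Q = sets (W0 \<Otimes>\<^sub>M PiM {..<N} Y)"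
    and reduction: "\<And>\<gamma>. admissible_policy N Y U \<gamma> \<Longrightarrow>
           (integrable M (team_loss N om0 \<eta> c \<gamma>) \<longleftrightarrow> integrable Q (static_loss N c \<gamma>)) \<and>
           team_cost M N om0 \<eta> c \<gamma> = (\<integral>z. static_loss N c \<gamma> z \<partial>Q)"
    using assms(5,7) unfolding stoch_partially_nested_def by blast
  have space_Q: "space Q = space (W0 \<Otimes>\<^sub>M PiM {..<N} Y)"
    using sets_Q by (rule sets_eq_imp_space_eq)
  have cost_le: "team_cost M N om0 \<eta> c (\<lambda>t y. \<alpha> *\<^sub>R \<gamma>1 t y + (1 - \<alpha>) *\<^sub>R \<gamma>2 t y)
      \<le> \<alpha> * team_cost M N om0 \<eta> c \<gamma>1 + (1 - \<alpha>) * team_cost M N om0 \<eta> c \<gamma>2"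
    if \<gamma>1: "admissible_policy N Y U \<gamma>1" and \<gamma>2: "admissible_policy N Y U \<gamma>2"
      and \<alpha>: "\<alpha> \<in> {0..1}" for \<gamma>1 \<gamma>2 \<alpha>
  proof -
    have mixed: "admissible_policy N Y U (\<lambda>t y. \<alpha> *\<^sub>R \<gamma>1 t y + (1 - \<alpha>) *\<^sub>R \<gamma>2 t y)"
      using admissible_policy_convex_combination[OF assms(3) \<gamma>1 \<gamma>2 \<alpha>] .
    have integrable: "integrable Q (static_loss N c \<gamma>)" if "admissible_policy N Y U \<gamma>" for \<gamma>
      using reduction[OF that] assms(6) that by blast
    have "(\<integral>z. static_loss N c (\<lambda>t y. \<alpha> *\<^sub>R \<gamma>1 t y + (1 - \<alpha>) *\<^sub>R \<gamma>2 t y) z \<partial>Q)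
        \<le> \<alpha> * (\<integral>z. static_loss N c \<gamma>1 z \<partial>Q) + (1 - \<alpha>) * (\<integral>z. static_loss N c \<gamma>2 z \<partial>Q)"
      using static_loss_convex_combination[OF assms(8) \<gamma>1 \<gamma>2 \<alpha>]
      by (intro integral_le_convex_combination integrable \<gamma>1 \<gamma>2 mixed) (simp add: space_Q)
    then show ?thesis
      using reduction[OF mixed] reduction[OF \<gamma>1] reduction[OF \<gamma>2] by simp
  qed
  show ?thesis
    unfolding convex_team_def using assms(6) cost_le by auto
qed

end
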